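(* Let $\mathcal{T}=(\mathbb{K}_i,\phi_i)_{i=0,\dots,m}$ be a tower with $\mathbb{K}_0=\emptyset$ whose maps are elementary inclusions or elementary contractions (named according to the naming convention below), let $\Delta$ be its dimension, $n$ its number of elementary inclusions, $n_0$ the number of vertex inclusions, and let $\hat{\mathbb{K}}_m$ be the last complex of the active small coning construction. Then $|\hat{\mathbb{K}}_m|\le n+2\cdot(\Delta+1)\cdot n\cdot(1+\log_2 n_0)=O(n\cdot\Delta\cdot\log_2 n_0)$.
   Context: Simplicial complexes are finite abstract simplicial complexes; the dimension of a tower is the maximal dimension of a simplex in any $\mathbb{K}_i$. $\phi_i$ is an elementary inclusion if $\mathbb{K}_{i+1}=\mathbb{K}_i\cup\{\sigma\}$ with $\sigma\notin\mathbb{K}_i$ and $\phi_i$ the inclusion (a vertex inclusion if $\sigma$ is a vertex); it is an elementary contraction of distinct vertices $u,v\in\mathbb{K}_i$ if for one of them, say $v$, the vertex set of $\mathbb{K}_{i+1}$ is that of $\mathbb{K}_i$ minus $v$, $\phi_i(u)=\phi_i(v)=u$, $\phi_i$ is the identity on other vertices, and $\mathbb{K}_{i+1}=\phi_i(\mathbb{K}_i)$. Active small coning construction: $\hat{\mathbb{K}}_0=\emptyset$; vertices of $\hat{\mathbb{K}}_i$ are flagged active/inactive; a simplex is active if all its vertices are. $\mathrm{Act}\overline{\mathrm{St}}(w,\hat{\mathbb{K}}_i)$ is the set of active simplices of $\hat{\mathbb{K}}_i$ in the closed star of $w$ (all faces of simplices containing $w$); $w\ast S=\{\{w\}\cup\tau:\tau\in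 S\}$. On an elementary inclusion of $\sigma$: $\hat{\mathbb{K}}_{i+1}=\hat{\mathbb{K}}_i\cup\{\sigma\}$, a new vertex being marked active. On an elementary contraction of $u,v$: if $|\mathrm{Act}\overline{\mathrm{St}}(u,\hat{\mathbb{K}}_i)|\le|\mathrm{Act}\overline{\mathrm{St}}(v,\hat{\mathbb{K}}_i)|$, set $\hat{\mathbb{K}}_{i+1}=\hat{\mathbb{K}}_i\cup(v\ast\mathrm{Act}\overline{\mathrm{St}}(u,\hat{\mathbb{K}}_i))$ and mark $u$ inactive; otherwise the same with $u,v$ swapped. Naming convention: each contraction maps $u,v$ to the one not marked inactive. *)

theory Defs
  imports Complex_Main
begin

text \<open>Simplices are nonempty finite vertex sets; a complex is a set of simplices.\<close>
type_synonym 'a cplx = "'a set set"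

text \<open>Elementary maps of a tower. \<open>Contr u v\<close> contracts the (unordered) pair u, v;
  which of the two names survives is dictated by the naming convention, i.e. by the
  active small coning construction (the vertex marked inactive disappears).\<close>
datatype 'a elem_op = Incl "'a set" | Contr 'a 'a

definition act_star :: "'a \<Rightarrow> 'a cplx \<Rightarrow> 'a set \<Rightarrow> 'a cplx" where
  "act_star w K A = {\<tau> \<in> K. \<tau> \<subseteq> A \<and> (\<exists>\<rho>\<in>K. w \<in> \<rho> \<and> \<tau> \<subseteq> \<rho>)}"

definition cone :: "'a \<Rightarrow> 'a cplx \<Rightarrow> 'a cplx" where
  "cone w S = {insert w \<tau> | \<tau>. \<tau> \<in> S}"

definition contract_cplx :: "'a \<Rightarrow> 'a \<Rightarrow> 'a cplx \<Rightarrow> 'a cplx" where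
  "contract_cplx u v K = (\<lambda>\<sigma>. (\<lambda>x. if x = u then v else x) ` \<sigma>) ` K"

text \<open>State: (tower complex K_i, coning complex hat K_i, active vertices).\<close>
fun step :: "'a cplx \<times> 'a cplx \<times> 'a set \<Rightarrow> 'a elem_op \<Rightarrow> 'a cplx \<times> 'a cplx \<times> 'a set" where
  "step (K, H, A) (Incl \<sigma>) =
     (insert \<sigma> K, insert \<sigma> H, if card \<sigma> = 1 then A \<union> \<sigma> else A)"
| "step (K, H, A) (Contr u v) =
     (if card (act_star u H A) \<le> card (act_star v H A)
      then (contract_cplx u v K, H \<union> cone v (act_star u H A), A - {u})
      else (contract_cplx v u K, H \<union> cone u (act_star v H A), A - {v}))"

fun states_from :: "'a cplx \<times> 'a cplx \<times> 'a set \<Rightarrow> 'a elem_op list \<Rightarrow> ('a cplx \<times> 'a cplx \<times> 'a set) list" where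
  "states_from s [] = [s]"
| "states_from s (f # fs) = s # states_from (step s f) fs"

definition states :: "'a elem_op list \<Rightarrow> ('a cplx \<times> 'a cplx \<times> 'a set) list" where
  "states fs = states_from ({}, {}, {}) fs"

definition tcplx :: "'a elem_op list \<Rightarrow> nat \<Rightarrow> 'a cplx" where
  "tcplx fs i = fst (states fs ! i)"

definition hat_last :: "'a elem_op list \<Rightarrow> 'a cplx" where
  "hat_last fs = fst (snd (last (states fs)))"

definition valid_tower :: "'a elem_op list \<Rightarrow> bool" where
  "valid_tower fs \<longleftrightarrow> (\<forall>i < length fs.
     (case fs ! i of
        Incl \<sigma> \<Rightarrow> finite \<sigma> \<and> \<sigma> \<noteq> {} \<and> \<sigma> \<notin> tcplx fs i
                 \<and> (\<forall>\<tau>. \<tau> \<subset> \<sigma> \<and> \<tau> \<noteq> {} \<longrightarrow> \<tau> \<in> tcplx fs i)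
                 \<and> (card \<sigma> = 1 \<longrightarrow> (\<forall>j \<le> i. \<sigma> \<notin> tcplx fs j))
      | Contr u v \<Rightarrow> u \<noteq> v \<and> {u} \<in> tcplx fs i \<and> {v} \<in> tcplx fs i))"

definition num_incl :: "'a elem_op list \<Rightarrow> nat" where
  "num_incl fs = length (filter (\<lambda>f. case f of Incl _ \<Rightarrow> True | _ \<Rightarrow> False) fs)"

definition num_vincl :: "'a elem_op list \<Rightarrow> nat" where
  "num_vincl fs = length (filter (\<lambda>f. case f of Incl \<sigma> \<Rightarrow> card \<sigma> = 1 | _ \<Rightarrow> False) fs)"

definition tower_dim :: "'a elem_op list \<Rightarrow> nat" where
  "tower_dim fs = Max (insert 0 {card \<sigma> - 1 | \<sigma> i. i \<le> length fs \<and> \<sigma> \<in> tcplx fs i})"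

end

theory Submission
  imports Defs
begin

text \<open>
  Give every active vertex w the weight k w, the number of vertex inclusions whose vertices have been
  merged into w, and let the potential of the current complex K be the sum over its simplices of
  the sum of log2 (k w) over their vertices; one simplex contributes at most C = (\<Delta> + 1) log2 n0.
  The active simplices of the coning complex H are exactly those of K, so the active closed star of
  w has 2 |St(w, K)| - 1 elements. Contracting x into y with |St(x, K)| \<le> |St(y, K)| therefore adds
  at most 2 |St(x, K)| - 1 simplices to H. The simplices of St(x, K) that survive the contraction
  gain log2 ((k x + k y) / k x) each and are no more numerous than the simplices containing y but
  not x, which gain log2 ((k x + k y) / k y) each; the two gains add up to at least 2. The simplices
  that collapse lose at most C each, but they also leave K. Hence |H| + (2 + C) |K| - potential
  grows by at most 3 + C per inclusion and never under a contraction, so |H| \<le> n (3 + C).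
\<close>

section \<open>Contraction of a simplicial complex\<close>

locale simplicial_complex =
  fixes K :: "'a cplx"
  assumes finite_complex: "finite K"
    and finite_simplex: "\<rho> \<in> K \<Longrightarrow> finite \<rho>"
    and simplex_nonempty: "\<rho> \<in> K \<Longrightarrow> \<rho> \<noteq> {}"
    and face_closed: "\<rho> \<in> K \<Longrightarrow> \<tau> \<subseteq> \<rho> \<Longrightarrow> \<tau> \<noteq> {} \<Longrightarrow> \<tau> \<in> K"

definition star :: "'a \<Rightarrow> 'a cplx \<Rightarrow> 'a cplx" where
  "star w K = {\<rho> \<in> K. w \<in> \<rho>}"

definition rename :: "'a \<Rightarrow> 'a \<Rightarrow> 'a set \<Rightarrow> 'a set" where
  "rename x y \<rho> = (\<lambda>z. if z = x then y else z) ` \<rho>"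

definition collapsing :: "'a \<Rightarrow> 'a \<Rightarrow> 'a cplx \<Rightarrow> 'a cplx" where
  "collapsing x y K = {\<rho> \<in> star x K. rename x y \<rho> \<in> K}"

lemma contract_cplx_eq_image_rename: "contract_cplx x y K = rename x y ` K"
  unfolding contract_cplx_def rename_def ..

lemma rename_mem: "x \<in> \<rho> \<Longrightarrow> rename x y \<rho> = insert y (\<rho> - {x})"
  unfolding rename_def by auto

lemma rename_not_mem: "x \<notin> \<rho> \<Longrightarrow> rename x y \<rho> = \<rho>"
  unfolding rename_def by auto

lemma not_mem_rename: "x \<noteq> y \<Longrightarrow> x \<notin> rename x y \<rho>"
  unfolding rename_def by auto

context simplicial_complex
begin

lemma card_closed_star:
  assumes "{w} \<in> K"
  shows "card {\<tau> \<in> K. \<exists>\<rho> \<in> K. w \<in> \<rho> \<and> \<tau> \<subseteq> \<rho>} = 2 * card (star w K) - 1"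
proof -
  let ?T = "(\<lambda>\<rho>. \<rho> - {w}) ` (star w K - {{w}})"
  have closed_star: "{\<tau> \<in> K. \<exists>\<rho> \<in> K. w \<in> \<rho> \<and> \<tau> \<subseteq> \<rho>} = star w K \<union> ?T"
  proof (intro equalityI subsetI)
    fix \<tau> assume "\<tau> \<in> {\<tau> \<in> K. \<exists>\<rho> \<in> K. w \<in> \<rho> \<and> \<tau> \<subseteq> \<rho>}"
    then obtain \<rho> where \<tau>: "\<tau> \<in> K" "\<rho> \<in> K" "w \<in> \<rho>" "\<tau> \<subseteq> \<rho>" by auto
    show "\<tau> \<in> star w K \<union> ?T"
    proof (cases "w \<in> \<tau>")
      case True
      then show ?thesis using \<tau>(1) unfolding star_def by blast
    next
      case False
      have "insert w \<tau> \<in> K" using face_closed[OF \<tau>(2), of "insert w \<tau>"] \<tau>(3,4) by blast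
      moreover have "insert w \<tau> \<noteq> {w}" using False simplex_nonempty[OF \<tau>(1)] by blast
      ultimately have "insert w \<tau> \<in> star w K - {{w}}" unfolding star_def by blast
      moreover have "\<tau> = insert w \<tau> - {w}" using False by blast
      ultimately show ?thesis by blast
    qed
  next
    fix \<tau> assume "\<tau> \<in> star w K \<union> ?T"
    then show "\<tau> \<in> {\<tau> \<in> K. \<exists>\<rho> \<in> K. w \<in> \<rho> \<and> \<tau> \<subseteq> \<rho>}"
    proof
      assume "\<tau> \<in> star w K"
      then show ?thesis unfolding star_def by blast
    next
      assume "\<tau> \<in> ?T"
      then obtain \<rho> where \<rho>: "\<rho> \<in> K" "w \<in> \<rho>" "\<rho> \<noteq> {w}" "\<tau> = \<rho> - {w}"
        unfolding star_def by blast
      then have "\<tau> \<in> K" using face_closed[OF \<rho>(1), of \<tau>] by blast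
      then show ?thesis using \<rho> by blast
    qed
  qed
  have "finite (star w K)" using finite_complex unfolding star_def by auto
  moreover have "{w} \<in> star w K" using assms unfolding star_def by auto
  moreover have "inj_on (\<lambda>\<rho>. \<rho> - {w}) (star w K - {{w}})"
    by (rule inj_onI) (metis DiffD1 insert_Diff mem_Collect_eq star_def)
  moreover have "star w K \<inter> ?T = {}" unfolding star_def by auto
  ultimately show ?thesis
    unfolding closed_star
    by (simp add: card_Un_disjoint card_image card_Diff_singleton card_gt_0_iff)
qed

lemma surviving_simplex_avoids_target:
  assumes "x \<noteq> y" "\<rho> \<in> star x K - collapsing x y K"
  shows "y \<notin> \<rho>"
proof
  assume "y \<in> \<rho>"
  with assms have "rename x y \<rho> = \<rho> - {x}" "\<rho> - {x} \<noteq> {}" "\<rho> \<in> K"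
    using rename_mem[of x \<rho> y] unfolding star_def by auto
  with face_closed have "rename x y \<rho> \<in> K" by blast
  with assms(2) show False unfolding collapsing_def by blast
qed

lemma contract_cplx_decomp:
  assumes "x \<noteq> y"
  shows "contract_cplx x y K = {\<rho> \<in> K. x \<notin> \<rho>} \<union> rename x y ` (star x K - collapsing x y K)"
proof -
  have "rename x y \<rho> \<in> {\<rho> \<in> K. x \<notin> \<rho>}" if "\<rho> \<in> collapsing x y K" for \<rho>
    using that not_mem_rename[OF assms] unfolding collapsing_def by blast
  moreover have "{\<rho> \<in> K. x \<notin> \<rho>} = rename x y ` {\<rho> \<in> K. x \<notin> \<rho>}"
    using rename_not_mem by (metis (mono_tags, lifting) image_cong image_ident mem_Collect_eq)
  moreover have "K = {\<rho> \<in> K. x \<notin> \<rho>} \<union> (star x K - collapsing x y K) \<union> collapsing x y K"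
    unfolding star_def collapsing_def by blast
  ultimately show ?thesis
    unfolding contract_cplx_eq_image_rename by blast
qed

lemma inj_on_rename_surviving:
  assumes "x \<noteq> y"
  shows "inj_on (rename x y) (star x K - collapsing x y K)"
proof (rule inj_onI)
  fix \<rho> \<rho>' assume \<rho>: "\<rho> \<in> star x K - collapsing x y K" and \<rho>': "\<rho>' \<in> star x K - collapsing x y K"
    and eq: "rename x y \<rho> = rename x y \<rho>'"
  have "\<rho> = insert x (rename x y \<rho> - {y})" "\<rho>' = insert x (rename x y \<rho>' - {y})"
    using \<rho> \<rho>' surviving_simplex_avoids_target[OF assms] rename_mem[of x _ y]
    unfolding star_def by auto
  with eq show "\<rho> = \<rho>'" by simp
qed

lemma contract_cplx_decomp_disjoint:
  "{\<rho> \<in> K. x \<notin> \<rho>} \<inter> rename x y ` (star x K - collapsing x y K) = {}"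
  unfolding collapsing_def star_def by auto

lemma card_contract_cplx:
  assumes "x \<noteq> y"
  shows "card K = card (contract_cplx x y K) + card (collapsing x y K)"
proof -
  let ?R = "{\<rho> \<in> K. x \<notin> \<rho>}" and ?S = "star x K - collapsing x y K" and ?D = "collapsing x y K"
  have fin: "finite ?R" "finite ?S" "finite ?D"
    using finite_complex unfolding star_def collapsing_def by auto
  have "card (contract_cplx x y K) = card ?R + card ?S"
    unfolding contract_cplx_decomp[OF assms]
    using fin contract_cplx_decomp_disjoint inj_on_rename_surviving[OF assms]
    by (simp add: card_Un_disjoint card_image)
  moreover have "K = (?R \<union> ?S) \<union> ?D"
    unfolding star_def collapsing_def by blast
  moreover have "card ((?R \<union> ?S) \<union> ?D) = card ?R + card ?S + card ?D"
  proof -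
    have "?R \<inter> ?S = {}" "(?R \<union> ?S) \<inter> ?D = {}"
      unfolding star_def collapsing_def by blast+
    with fin show ?thesis by (simp add: card_Un_disjoint del: Un_Diff_cancel Un_Diff_cancel2)
  qed
  ultimately show ?thesis by simp
qed

lemma card_star_eq_surviving_collapsing:
  "card (star x K) = card (star x K - collapsing x y K) + card (collapsing x y K)"
proof -
  have sub: "collapsing x y K \<subseteq> star x K" and fin: "finite (star x K)"
    using finite_complex unfolding collapsing_def star_def by auto
  then show ?thesis
    using card_Diff_subset[OF finite_subset[OF sub fin] sub] card_mono[OF fin sub] by linarith
qed

lemma card_surviving_le:
  assumes "x \<noteq> y" "card (star x K) \<le> card (star y K)"
  shows "card (star x K - collapsing x y K) \<le> card {\<rho> \<in> K. y \<in> \<rho> \<and> x \<notin> \<rho>}"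
proof -
  have fin: "finite {\<rho> \<in> K. y \<in> \<rho> \<and> x \<notin> \<rho>}" "finite (collapsing x y K)" "finite (star x K)"
    using finite_complex unfolding star_def collapsing_def by auto
  have "star y K \<subseteq> {\<rho> \<in> K. y \<in> \<rho> \<and> x \<notin> \<rho>} \<union> collapsing x y K"
  proof
    fix \<rho> assume \<rho>: "\<rho> \<in> star y K"
    show "\<rho> \<in> {\<rho> \<in> K. y \<in> \<rho> \<and> x \<notin> \<rho>} \<union> collapsing x y K"
    proof (cases "x \<in> \<rho>")
      case True
      with \<rho> assms(1) have "rename x y \<rho> = \<rho> - {x}" "\<rho> - {x} \<noteq> {}" "\<rho> \<in> K"
        using rename_mem[of x \<rho> y] unfolding star_def by auto
      with face_closed have "rename x y \<rho> \<in> K" by blast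
      with True \<rho> show ?thesis unfolding collapsing_def star_def by blast
    qed (use \<rho> in \<open>simp add: star_def\<close>)
  qed
  from card_mono[OF finite_UnI[OF fin(1,2)] this]
  have "card (star y K) \<le> card {\<rho> \<in> K. y \<in> \<rho> \<and> x \<notin> \<rho>} + card (collapsing x y K)"
    using card_Un_le[of "{\<rho> \<in> K. y \<in> \<rho> \<and> x \<notin> \<rho>}" "collapsing x y K"] by linarith
  then show ?thesis using assms(2) card_star_eq_surviving_collapsing[of x y] by linarith
qed

lemma simplicial_complex_contract_cplx: "simplicial_complex (contract_cplx x y K)"
proof unfold_locales
  show "finite (contract_cplx x y K)"
    unfolding contract_cplx_eq_image_rename using finite_complex by simp
  fix \<rho>' \<tau>
  assume "\<rho>' \<in> contract_cplx x y K"
  then obtain \<rho> where \<rho>: "\<rho> \<in> K" "\<rho>' = rename x y \<rho>"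
    unfolding contract_cplx_eq_image_rename by blast
  then show "finite \<rho>'" "\<rho>' \<noteq> {}"
    using finite_simplex simplex_nonempty unfolding rename_def by auto
  assume "\<tau> \<subseteq> \<rho>'" "\<tau> \<noteq> {}"
  define \<tau>' where "\<tau>' = \<rho> \<inter> (\<lambda>z. if z = x then y else z) -` \<tau>"
  have "rename x y \<tau>' = \<tau>" using \<open>\<tau> \<subseteq> \<rho>'\<close> \<rho>(2) unfolding \<tau>'_def rename_def by auto
  moreover from this \<open>\<tau> \<noteq> {}\<close> have "\<tau>' \<noteq> {}" unfolding rename_def by auto
  then have "\<tau>' \<in> K" using face_closed[OF \<rho>(1), of \<tau>'] unfolding \<tau>'_def by blast
  ultimately show "\<tau> \<in> contract_cplx x y K"
    unfolding contract_cplx_eq_image_rename by (metis imageI)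
qed

end

section \<open>Logarithmic weights\<close>

lemma log2_AM_GM:
  fixes a b :: real
  assumes "0 < a" "0 < b"
  shows "2 + log 2 a + log 2 b \<le> 2 * log 2 (a + b)"
proof -
  have "4 * (a * b) \<le> (a + b) * (a + b)"
    using sum_squares_ge_zero[of "a - b" 0] by (simp add: algebra_simps power2_eq_square)
  hence "log 2 (4 * (a * b)) \<le> log 2 ((a + b) * (a + b))"
    using assms by simp
  moreover have "log 2 (4::real) = 2"
    using log_pow_cancel[of "2::real" 2] by simp
  ultimately show ?thesis
    using assms by (simp add: log_mult)
qed

text \<open>Also for n = 0, since log 2 0 = 0 in Isabelle.\<close>
lemma log2_of_nat_nonneg: "0 \<le> log 2 (real (n::nat))"
  by (cases "n = 0") (simp_all add: log_def)

definition log_weight :: "('a \<Rightarrow> nat) \<Rightarrow> 'a set \<Rightarrow> real" where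
  "log_weight k \<rho> = (\<Sum>w\<in>\<rho>. log 2 (real (k w)))"

definition potential :: "('a \<Rightarrow> nat) \<Rightarrow> 'a cplx \<Rightarrow> real" where
  "potential k K = (\<Sum>\<rho>\<in>K. log_weight k \<rho>)"

lemma log_weight_fun_upd:
  assumes "finite \<rho>"
  shows "log_weight (k(y := m)) \<rho>
           = log_weight k \<rho> + (if y \<in> \<rho> then log 2 (real m) - log 2 (real (k y)) else 0)"
proof -
  have rest: "log_weight (k(y := m)) (\<rho> - {y}) = log_weight k (\<rho> - {y})"
    unfolding log_weight_def by (intro sum.cong) auto
  show ?thesis
  proof (cases "y \<in> \<rho>")
    case True
    then have "log_weight k' \<rho> = log 2 (real (k' y)) + log_weight k' (\<rho> - {y})" for k'
      using assms unfolding log_weight_def by (simp add: sum.remove)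
    from this[of "k(y := m)"] this[of k] rest True show ?thesis by simp
  next
    case False
    then show ?thesis using rest by simp
  qed
qed

lemma log_weight_rename_fun_upd:
  assumes "finite \<rho>" "x \<in> \<rho>" "y \<notin> \<rho>"
  shows "log_weight (k(y := m)) (rename x y \<rho>) = log_weight k \<rho> + log 2 (real m) - log 2 (real (k x))"
proof -
  have "log_weight (k(y := m)) (rename x y \<rho>) = log 2 (real m) + log_weight k (\<rho> - {x})"
  proof -
    have "log_weight (k(y := m)) (\<rho> - {x}) = log_weight k (\<rho> - {x})"
      unfolding log_weight_def using assms(3) by (intro sum.cong) auto
    then show ?thesis
      using assms rename_mem[of x \<rho> y] unfolding log_weight_def by simp
  qed
  moreover have "log_weight k \<rho> = log 2 (real (k x)) + log_weight k (\<rho> - {x})"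
    using assms unfolding log_weight_def by (simp add: sum.remove)
  ultimately show ?thesis by simp
qed

lemma log_weight_nonneg: "(\<And>w. w \<in> \<rho> \<Longrightarrow> 1 \<le> k w) \<Longrightarrow> 0 \<le> log_weight k \<rho>"
  unfolding log_weight_def by (intro sum_nonneg) (simp add: Suc_le_eq)

lemma log_weight_le:
  assumes "finite \<rho>" "card \<rho> \<le> D + 1" "\<And>w. w \<in> \<rho> \<Longrightarrow> 1 \<le> k w \<and> k w \<le> N"
  shows "log_weight k \<rho> \<le> (real D + 1) * log 2 (real N)"
proof -
  have "log_weight k \<rho> \<le> (\<Sum>w\<in>\<rho>. log 2 (real N))"
    unfolding log_weight_def
  proof (intro sum_mono)
    fix w assume "w \<in> \<rho>"
    with assms(3) have "1 \<le> real (k w)" "real (k w) \<le> real N" by auto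
    then show "log 2 (real (k w)) \<le> log 2 (real N)" by simp
  qed
  also have "\<dots> = real (card \<rho>) * log 2 (real N)" by simp
  also have "\<dots> \<le> (real D + 1) * log 2 (real N)"
    using assms(2) log2_of_nat_nonneg[of N] by (intro mult_right_mono) auto
  finally show ?thesis .
qed

lemma potential_insert_ge:
  assumes "finite K" "\<sigma> \<notin> K" "\<And>w. w \<in> \<sigma> \<Longrightarrow> 1 \<le> k' w"
    and agree: "\<And>\<rho> w. \<rho> \<in> K \<Longrightarrow> w \<in> \<rho> \<Longrightarrow> k' w = k w"
  shows "potential k K \<le> potential k' (insert \<sigma> K)"
proof -
  have "potential k' K = potential k K"
    unfolding potential_def log_weight_def using agree by (intro sum.cong refl) auto
  moreover have "0 \<le> log_weight k' \<sigma>" using log_weight_nonneg assms(3) by blast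
  ultimately show ?thesis
    unfolding potential_def using assms(1,2) by simp
qed

lemma sum_fun_upd_merge:
  assumes "finite A" "x \<in> A" "y \<in> A" "x \<noteq> y"
  shows "sum (k(y := k x + k y)) (A - {x}) = sum k A"
proof -
  have y: "y \<in> A - {x}" and fin: "finite (A - {x})" using assms by auto
  have "sum (k(y := k x + k y)) (A - {x}) = (k x + k y) + sum (k(y := k x + k y)) (A - {x} - {y})"
    using sum.remove[OF fin y, of "k(y := k x + k y)"] by simp
  also have "sum (k(y := k x + k y)) (A - {x} - {y}) = sum k (A - {x} - {y})"
    by (intro sum.cong) auto
  also have "k x + k y + sum k (A - {x} - {y}) = sum k A"
    using sum.remove[OF assms(1,2), of k] sum.remove[OF fin y, of k] by (simp add: add.assoc)
  finally show ?thesis .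
qed

context simplicial_complex
begin

lemma potential_contract_cplx:
  assumes "x \<noteq> y"
  shows "potential (k(y := m)) (contract_cplx x y K)
           = potential k K
             + (log 2 (real m) - log 2 (real (k y))) * card {\<rho> \<in> K. y \<in> \<rho> \<and> x \<notin> \<rho>}
             + (log 2 (real m) - log 2 (real (k x))) * card (star x K - collapsing x y K)
             - sum (log_weight k) (collapsing x y K)"
proof -
  let ?R = "{\<rho> \<in> K. x \<notin> \<rho>}" and ?S = "star x K - collapsing x y K" and ?D = "collapsing x y K"
  let ?k' = "k(y := m)"
  have fin: "finite ?R" "finite ?S" "finite ?D"
    using finite_complex unfolding star_def collapsing_def by auto
  have "potential ?k' (contract_cplx x y K) = sum (log_weight ?k') ?R + sum (log_weight ?k' \<circ> rename x y) ?S"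
    unfolding potential_def contract_cplx_decomp[OF assms]
    using fin contract_cplx_decomp_disjoint inj_on_rename_surviving[OF assms]
    by (simp add: sum.union_disjoint sum.reindex)
  moreover have "sum (log_weight ?k') ?R
      = sum (log_weight k) ?R + (log 2 (real m) - log 2 (real (k y))) * card {\<rho> \<in> K. y \<in> \<rho> \<and> x \<notin> \<rho>}"
  proof -
    have "sum (log_weight ?k') ?R
        = sum (log_weight k) ?R + (\<Sum>\<rho>\<in>?R. if y \<in> \<rho> then log 2 (real m) - log 2 (real (k y)) else 0)"
      using finite_simplex by (simp add: log_weight_fun_upd sum.distrib)
    also have "(\<Sum>\<rho>\<in>?R. if y \<in> \<rho> then log 2 (real m) - log 2 (real (k y)) else 0)
        = (log 2 (real m) - log 2 (real (k y))) * card {\<rho> \<in> K. y \<in> \<rho> \<and> x \<notin> \<rho>}"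
    proof -
      have "(\<Sum>\<rho>\<in>?R. if y \<in> \<rho> then log 2 (real m) - log 2 (real (k y)) else 0)
          = (\<Sum>\<rho>\<in>{\<rho> \<in> ?R. y \<in> \<rho>}. log 2 (real m) - log 2 (real (k y)))"
        by (rule sum.inter_filter[OF fin(1), symmetric])
      also have "{\<rho> \<in> ?R. y \<in> \<rho>} = {\<rho> \<in> K. y \<in> \<rho> \<and> x \<notin> \<rho>}" by blast
      finally show ?thesis by simp
    qed
    finally show ?thesis .
  qed
  moreover have "sum (log_weight ?k' \<circ> rename x y) ?S
      = sum (log_weight k) ?S + (log 2 (real m) - log 2 (real (k x))) * card ?S"
  proof -
    have "(log_weight ?k' \<circ> rename x y) \<rho> = log_weight k \<rho> + (log 2 (real m) - log 2 (real (k x)))"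
      if "\<rho> \<in> ?S" for \<rho>
      using that finite_simplex surviving_simplex_avoids_target[OF assms that]
        log_weight_rename_fun_upd[of \<rho> x y k m]
      unfolding star_def by auto
    then show ?thesis by (simp add: sum.distrib)
  qed
  moreover have "potential k K = sum (log_weight k) ?R + sum (log_weight k) ?S + sum (log_weight k) ?D"
  proof -
    have "K = (?R \<union> ?S) \<union> ?D" "?R \<inter> ?S = {}" "(?R \<union> ?S) \<inter> ?D = {}"
      unfolding star_def collapsing_def by blast+
    then have "potential k K = sum (log_weight k) (?R \<union> ?S) + sum (log_weight k) ?D"
      unfolding potential_def using fin by (metis finite_UnI sum.union_disjoint)
    then show ?thesis using fin \<open>?R \<inter> ?S = {}\<close> by (simp add: sum.union_disjoint)
  qed
  ultimately show ?thesis by linarith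
qed

lemma potential_gain_contract_cplx:
  assumes "x \<noteq> y" "1 \<le> k x" "1 \<le> k y" "card (star x K) \<le> card (star y K)"
    and bounded: "\<And>\<rho>. \<rho> \<in> K \<Longrightarrow> log_weight k \<rho> \<le> C"
  shows "2 * real (card (star x K))
           \<le> potential (k(y := k x + k y)) (contract_cplx x y K) - potential k K
             + (C + 2) * (real (card K) - real (card (contract_cplx x y K)))"
proof -
  let ?R = "{\<rho> \<in> K. y \<in> \<rho> \<and> x \<notin> \<rho>}" and ?S = "star x K - collapsing x y K"
    and ?D = "collapsing x y K"
  define gain_x where "gain_x = log 2 (real (k x + k y)) - log 2 (real (k x))"
  define gain_y where "gain_y = log 2 (real (k x + k y)) - log 2 (real (k y))"
  have gains: "2 \<le> gain_x + gain_y" "0 \<le> gain_y"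
    using log2_AM_GM[of "real (k x)" "real (k y)"] assms(2,3) unfolding gain_x_def gain_y_def by auto
  have "2 * real (card ?S) \<le> (gain_x + gain_y) * card ?S"
    using gains(1) by (intro mult_right_mono) simp_all
  also have "\<dots> \<le> gain_x * card ?S + gain_y * card ?R"
    using gains(2) card_surviving_le[OF assms(1,4)] by (simp add: distrib_right mult_left_mono)
  finally have "2 * real (card ?S) \<le> gain_x * card ?S + gain_y * card ?R" .
  moreover have "sum (log_weight k) ?D \<le> C * card ?D"
    using sum_bounded_above[of ?D "log_weight k" C] bounded
    unfolding collapsing_def star_def by (auto simp: mult.commute)
  moreover have "(C + 2) * (real (card K) - real (card (contract_cplx x y K))) = C * card ?D + 2 * card ?D"
    using card_contract_cplx[OF assms(1)] by (simp add: algebra_simps)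
  ultimately show ?thesis
    using potential_contract_cplx[OF assms(1), of k "k x + k y"] card_star_eq_surviving_collapsing[of x y]
    unfolding gain_x_def gain_y_def by linarith
qed

end

definition amortized_size :: "real \<Rightarrow> ('a \<Rightarrow> nat) \<Rightarrow> 'a cplx \<Rightarrow> 'a cplx \<Rightarrow> real" where
  "amortized_size C k K H = real (card H) + (2 + C) * real (card K) - potential k K"

lemma amortized_size_insert_le:
  assumes "finite K" "finite H" "\<sigma> \<notin> K" "\<And>w. w \<in> \<sigma> \<Longrightarrow> 1 \<le> k' w"
    and "\<And>\<rho> w. \<rho> \<in> K \<Longrightarrow> w \<in> \<rho> \<Longrightarrow> k' w = k w"
  shows "amortized_size C k' (insert \<sigma> K) (insert \<sigma> H) \<le> amortized_size C k K H + (3 + C)"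
proof -
  have "potential k K \<le> potential k' (insert \<sigma> K)" using assms(1,3-5) by (rule potential_insert_ge)
  moreover have "card (insert \<sigma> H) \<le> card H + 1" using assms(2) by (simp add: card_insert_if)
  moreover have "card (insert \<sigma> K) = card K + 1" using assms(1,3) by simp
  ultimately show ?thesis unfolding amortized_size_def by (simp add: algebra_simps)
qed

lemma card_le_amortized_size:
  assumes "\<And>\<rho>. \<rho> \<in> K \<Longrightarrow> log_weight k \<rho> \<le> C"
  shows "real (card H) \<le> amortized_size C k K H"
proof -
  have "potential k K \<le> real (card K) * C"
    unfolding potential_def using assms by (intro sum_bounded_above)
  then show ?thesis unfolding amortized_size_def by (simp add: algebra_simps)
qed

section \<open>The active small coning construction\<close>

text \<open>K is the current complex of the tower and H the coning complex with active vertices A;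
  the active simplices of H are exactly those of K.\<close>
locale coning_state = simplicial_complex K for K :: "'a cplx" +
  fixes H :: "'a cplx" and A :: "'a set"
  assumes finite_coned: "finite H"
    and finite_active: "finite A"
    and simplex_active: "\<rho> \<in> K \<Longrightarrow> \<rho> \<subseteq> A"
    and vertex_active: "x \<in> A \<Longrightarrow> {x} \<in> K"
    and complex_subset_coned: "K \<subseteq> H"
    and active_coned_simplex: "\<tau> \<in> H \<Longrightarrow> \<tau> \<subseteq> A \<Longrightarrow> \<tau> \<in> K"
    and face_closed_coned: "\<rho> \<in> H \<Longrightarrow> \<tau> \<subseteq> \<rho> \<Longrightarrow> \<tau> \<noteq> {} \<Longrightarrow> \<tau> \<in> H"

lemma coning_state_empty: "coning_state {} {} {}"
  by unfold_locales auto

lemma card_Un_cone_le: "finite S \<Longrightarrow> card (H \<union> cone y S) \<le> card H + card S"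
proof -
  assume "finite S"
  have "cone y S = insert y ` S" unfolding cone_def by auto
  then have "card (cone y S) \<le> card S" using card_image_le[OF \<open>finite S\<close>] by simp
  then show ?thesis using card_Un_le[of H "cone y S"] by linarith
qed

context coning_state
begin

lemma act_star_eq_closed_star:
  assumes "w \<in> A"
  shows "act_star w H A = {\<tau> \<in> K. \<exists>\<rho> \<in> K. w \<in> \<rho> \<and> \<tau> \<subseteq> \<rho>}"
proof (intro equalityI subsetI)
  fix \<tau> assume "\<tau> \<in> act_star w H A"
  then obtain \<rho> where \<tau>: "\<tau> \<in> H" "\<tau> \<subseteq> A" "\<rho> \<in> H" "w \<in> \<rho>" "\<tau> \<subseteq> \<rho>"
    unfolding act_star_def by auto
  have "insert w \<tau> \<in> H" using face_closed_coned[OF \<tau>(3), of "insert w \<tau>"] \<tau>(4,5) by blast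
  then have "insert w \<tau> \<in> K" using active_coned_simplex \<tau>(2) assms by blast
  with \<tau> active_coned_simplex show "\<tau> \<in> {\<tau> \<in> K. \<exists>\<rho> \<in> K. w \<in> \<rho> \<and> \<tau> \<subseteq> \<rho>}" by blast
next
  fix \<tau> assume "\<tau> \<in> {\<tau> \<in> K. \<exists>\<rho> \<in> K. w \<in> \<rho> \<and> \<tau> \<subseteq> \<rho>}"
  then show "\<tau> \<in> act_star w H A"
    using simplex_active complex_subset_coned unfolding act_star_def by blast
qed

lemma card_act_star:
  assumes "w \<in> A"
  shows "card (act_star w H A) = 2 * card (star w K) - 1"
  using card_closed_star[OF vertex_active[OF assms]]
  unfolding act_star_eq_closed_star[OF assms] .

lemma active_if_proper_faces:
  assumes "\<And>\<tau>. \<tau> \<subset> \<sigma> \<Longrightarrow> \<tau> \<noteq> {} \<Longrightarrow> \<tau> \<in> K" "card \<sigma> \<noteq> 1"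
  shows "\<sigma> \<subseteq> A"
proof
  fix z assume "z \<in> \<sigma>"
  with assms(2) have "{z} \<subset> \<sigma>" by (auto simp: card_Suc_eq)
  with assms(1) have "{z} \<in> K" by blast
  then show "z \<in> A" using simplex_active by blast
qed

lemma coning_state_insert:
  assumes \<sigma>: "finite \<sigma>" "\<sigma> \<noteq> {}" "\<sigma> \<notin> K"
    and faces: "\<And>\<tau>. \<tau> \<subset> \<sigma> \<Longrightarrow> \<tau> \<noteq> {} \<Longrightarrow> \<tau> \<in> K"
    and fresh: "card \<sigma> = 1 \<Longrightarrow> \<forall>\<tau> \<in> H. \<sigma> \<inter> \<tau> = {}"
  shows "coning_state (insert \<sigma> K) (insert \<sigma> H) (if card \<sigma> = 1 then A \<union> \<sigma> else A)"
proof -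
  let ?A = "if card \<sigma> = 1 then A \<union> \<sigma> else A"
  have faces': "\<tau> \<in> insert \<sigma> K" if "\<tau> \<subseteq> \<sigma>" "\<tau> \<noteq> {}" for \<tau>
    using faces that by (cases "\<tau> = \<sigma>") auto
  have \<sigma>_active: "\<sigma> \<subseteq> A" if "card \<sigma> \<noteq> 1"
    using active_if_proper_faces[OF faces that] .
  show ?thesis
  proof unfold_locales
    show "finite (insert \<sigma> K)" "finite (insert \<sigma> H)" "finite ?A"
      using finite_complex finite_coned finite_active \<sigma>(1) by auto
    show "insert \<sigma> K \<subseteq> insert \<sigma> H" using complex_subset_coned by blast
    fix \<rho> \<tau> x
    show "\<rho> \<in> insert \<sigma> K \<Longrightarrow> finite \<rho>" "\<rho> \<in> insert \<sigma> K \<Longrightarrow> \<rho> \<noteq> {}"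
      using finite_simplex simplex_nonempty \<sigma>(1,2) by auto
    show "\<rho> \<in> insert \<sigma> K \<Longrightarrow> \<rho> \<subseteq> ?A"
      using simplex_active \<sigma>_active by auto
    show "\<rho> \<in> insert \<sigma> K \<Longrightarrow> \<tau> \<subseteq> \<rho> \<Longrightarrow> \<tau> \<noteq> {} \<Longrightarrow> \<tau> \<in> insert \<sigma> K"
      using face_closed faces' by blast
    show "x \<in> ?A \<Longrightarrow> {x} \<in> insert \<sigma> K"
      using vertex_active by (auto simp: card_Suc_eq split: if_splits)
    show "\<tau> \<in> insert \<sigma> H \<Longrightarrow> \<tau> \<subseteq> ?A \<Longrightarrow> \<tau> \<in> insert \<sigma> K"
      using active_coned_simplex fresh by (fastforce split: if_splits)
    show "\<rho> \<in> insert \<sigma> H \<Longrightarrow> \<tau> \<subseteq> \<rho> \<Longrightarrow> \<tau> \<noteq> {} \<Longrightarrow> \<tau> \<in> insert \<sigma> H"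
      using face_closed_coned faces' complex_subset_coned by blast
  qed
qed

lemma contract_cplx_subset_coned:
  assumes "{y} \<in> K"
  shows "contract_cplx x y K \<subseteq> H \<union> cone y (act_star x H A)"
proof
  fix \<rho>' assume "\<rho>' \<in> contract_cplx x y K"
  then obtain \<rho> where \<rho>: "\<rho> \<in> K" "\<rho>' = rename x y \<rho>"
    unfolding contract_cplx_eq_image_rename by blast
  consider "x \<notin> \<rho>" | "\<rho> = {x}" | "x \<in> \<rho>" "\<rho> - {x} \<noteq> {}" by blast
  then show "\<rho>' \<in> H \<union> cone y (act_star x H A)"
  proof cases
    case 1
    then show ?thesis using \<rho> rename_not_mem[OF 1] complex_subset_coned by auto
  next
    case 2
    then show ?thesis using \<rho>(2) assms complex_subset_coned by (auto simp: rename_def)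
  next
    case 3
    then have "\<rho> - {x} \<in> K" using face_closed[OF \<rho>(1), of "\<rho> - {x}"] by blast
    then have "\<rho> - {x} \<in> act_star x H A"
      using \<rho>(1) simplex_active[OF \<rho>(1)] complex_subset_coned 3(1) unfolding act_star_def by blast
    then show ?thesis using \<rho>(2) rename_mem[OF 3(1)] unfolding cone_def by blast
  qed
qed

lemma active_coned_in_contract_cplx:
  assumes "x \<in> A" "\<tau> \<in> H \<union> cone y (act_star x H A)" "\<tau> \<subseteq> A - {x}"
  shows "\<tau> \<in> contract_cplx x y K"
  unfolding contract_cplx_eq_image_rename
proof (cases "\<tau> \<in> H")
  case True
  have "\<tau> \<in> K" using active_coned_simplex[OF True] assms(3) by blast
  moreover have "rename x y \<tau> = \<tau>" using rename_not_mem[of x \<tau> y] assms(3) by blast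
  ultimately show "\<tau> \<in> rename x y ` K" by (metis imageI)
next
  case False
  with assms(2) obtain \<tau>0 where \<tau>0: "\<tau> = insert y \<tau>0" "\<tau>0 \<in> act_star x H A"
    unfolding cone_def by blast
  then obtain \<rho> where \<rho>: "\<tau>0 \<subseteq> A" "\<rho> \<in> H" "x \<in> \<rho>" "\<tau>0 \<subseteq> \<rho>"
    unfolding act_star_def by blast
  have "insert x \<tau>0 \<in> H" using face_closed_coned[OF \<rho>(2), of "insert x \<tau>0"] \<rho>(3,4) by blast
  then have "insert x \<tau>0 \<in> K" using active_coned_simplex \<rho>(1) assms(1) by blast
  moreover have "rename x y (insert x \<tau>0) = \<tau>"
    using rename_mem[of x "insert x \<tau>0" y] \<tau>0(1) assms(3) by auto
  ultimately show "\<tau> \<in> rename x y ` K" by (metis imageI)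
qed

lemma face_closed_coned_cone:
  assumes "{y} \<in> K" "\<rho> \<in> H \<union> cone y (act_star x H A)" "\<tau> \<subseteq> \<rho>" "\<tau> \<noteq> {}"
  shows "\<tau> \<in> H \<union> cone y (act_star x H A)"
proof (cases "\<rho> \<in> H")
  case True
  then show ?thesis using face_closed_coned assms(3,4) by blast
next
  case False
  with assms(2) obtain \<tau>0 where \<tau>0: "\<rho> = insert y \<tau>0" "\<tau>0 \<in> act_star x H A"
    unfolding cone_def by blast
  then obtain \<rho>1 where \<rho>1: "\<tau>0 \<in> H" "\<tau>0 \<subseteq> A" "\<rho>1 \<in> H" "x \<in> \<rho>1" "\<tau>0 \<subseteq> \<rho>1"
    unfolding act_star_def by blast
  consider "y \<notin> \<tau>" | "\<tau> = {y}" | "y \<in> \<tau>" "\<tau> - {y} \<noteq> {}" by blast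
  then show ?thesis
  proof cases
    case 1
    then have "\<tau> \<subseteq> \<tau>0" using assms(3) \<tau>0(1) by blast
    then show ?thesis using face_closed_coned[OF \<rho>1(1)] assms(4) by blast
  next
    case 2
    then show ?thesis using assms(1) complex_subset_coned by blast
  next
    case 3
    have "\<tau> - {y} \<subseteq> \<tau>0" using assms(3) \<tau>0(1) by blast
    then have "\<tau> - {y} \<in> H" "\<tau> - {y} \<subseteq> A" "\<tau> - {y} \<subseteq> \<rho>1"
      using face_closed_coned[OF \<rho>1(1), of "\<tau> - {y}"] 3(2) \<rho>1(2,5) by blast+
    then have "\<tau> - {y} \<in> act_star x H A" using \<rho>1(3,4) unfolding act_star_def by blast
    moreover have "\<tau> = insert y (\<tau> - {y})" using 3(1) by blast
    ultimately show ?thesis unfolding cone_def by blast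
  qed
qed

lemma coning_state_contract:
  assumes xy: "x \<noteq> y" and x: "{x} \<in> K" and y: "{y} \<in> K"
  shows "coning_state (contract_cplx x y K) (H \<union> cone y (act_star x H A)) (A - {x})"
proof -
  have xA: "x \<in> A" and yA: "y \<in> A" using simplex_active x y by auto
  have "finite (act_star x H A)" using finite_coned unfolding act_star_def by simp
  show ?thesis
  proof (intro coning_state.intro coning_state_axioms.intro simplicial_complex_contract_cplx)
    show "finite (H \<union> cone y (act_star x H A))"
      using finite_coned \<open>finite (act_star x H A)\<close> unfolding cone_def by simp
    show "finite (A - {x})" using finite_active by simp
    show "contract_cplx x y K \<subseteq> H \<union> cone y (act_star x H A)"
      using contract_cplx_subset_coned[OF y] .
    fix \<rho> \<tau> z
    show "\<rho> \<in> contract_cplx x y K \<Longrightarrow> \<rho> \<subseteq> A - {x}"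
      using simplex_active yA xy unfolding contract_cplx_eq_image_rename rename_def by auto
    show "z \<in> A - {x} \<Longrightarrow> {z} \<in> contract_cplx x y K"
      using vertex_active rename_not_mem[of x "{z}" y] unfolding contract_cplx_eq_image_rename by force
    show "\<tau> \<in> H \<union> cone y (act_star x H A) \<Longrightarrow> \<tau> \<subseteq> A - {x} \<Longrightarrow> \<tau> \<in> contract_cplx x y K"
      using active_coned_in_contract_cplx[OF xA] by blast
    show "\<rho> \<in> H \<union> cone y (act_star x H A) \<Longrightarrow> \<tau> \<subseteq> \<rho> \<Longrightarrow> \<tau> \<noteq> {}
        \<Longrightarrow> \<tau> \<in> H \<union> cone y (act_star x H A)"
      using face_closed_coned_cone[OF y] by blast
  qed
qed

lemma amortized_size_contract_le:
  assumes xy: "x \<noteq> y" and x: "{x} \<in> K" and y: "{y} \<in> K"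
    and smaller: "card (act_star x H A) \<le> card (act_star y H A)"
    and weights: "\<And>z. z \<in> A \<Longrightarrow> 1 \<le> k z" and bounded: "\<And>\<rho>. \<rho> \<in> K \<Longrightarrow> log_weight k \<rho> \<le> C"
  shows "amortized_size C (k(y := k x + k y)) (contract_cplx x y K) (H \<union> cone y (act_star x H A))
           \<le> amortized_size C k K H"
proof -
  have xA: "x \<in> A" and yA: "y \<in> A" using simplex_active x y by auto
  have "1 \<le> card (star x K)"
    using x finite_complex unfolding star_def by (simp add: Suc_le_eq card_gt_0_iff) blast
  moreover have "card (star x K) \<le> card (star y K)"
    using smaller card_act_star[OF xA] card_act_star[OF yA] calculation by linarith
  then have "2 * real (card (star x K))
      \<le> potential (k(y := k x + k y)) (contract_cplx x y K) - potential k K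
        + (C + 2) * (real (card K) - real (card (contract_cplx x y K)))"
    using potential_gain_contract_cplx[OF xy] weights xA yA bounded by blast
  moreover have "card (H \<union> cone y (act_star x H A)) \<le> card H + (2 * card (star x K) - 1)"
    using card_Un_cone_le[of "act_star x H A" H y] finite_coned card_act_star[OF xA]
    unfolding act_star_def by simp
  ultimately show ?thesis unfolding amortized_size_def by (simp add: algebra_simps)
qed

end

section \<open>Towers\<close>

lemma length_states_from: "length (states_from s fs) = Suc (length fs)"
  by (induction fs arbitrary: s) auto

lemma states_from_Suc_nth:
  "i < length fs \<Longrightarrow> states_from s fs ! Suc i = step (states_from s fs ! i) (fs ! i)"
proof (induction fs arbitrary: s i)
  case (Cons f fs)
  then show ?case by (cases i; cases fs) auto
qed simp

lemma states_0: "states fs ! 0 = ({}, {}, {})"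
  unfolding states_def by (cases fs) auto

lemma states_Suc: "i < length fs \<Longrightarrow> states fs ! Suc i = step (states fs ! i) (fs ! i)"
  unfolding states_def by (rule states_from_Suc_nth)

lemma hat_last_eq: "hat_last fs = fst (snd (states fs ! length fs))"
proof -
  have "states fs \<noteq> []" unfolding states_def by (cases fs) auto
  then have "last (states fs) = states fs ! (length (states fs) - 1)"
    by (rule last_conv_nth)
  also have "length (states fs) - 1 = length fs"
    unfolding states_def by (simp add: length_states_from)
  finally show ?thesis unfolding hat_last_def by simp
qed

lemma finite_fst_step: "finite (fst s) \<Longrightarrow> finite (fst (step s f))"
  by (cases s; cases f) (auto simp: contract_cplx_def)

lemma finite_tcplx: "i \<le> length fs \<Longrightarrow> finite (tcplx fs i)"
proof (induction i)
  case 0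
  then show ?case unfolding tcplx_def states_0 by simp
next
  case (Suc i)
  then show ?case unfolding tcplx_def states_Suc[OF Suc_le_lessD[OF Suc.prems]]
    using finite_fst_step by (simp add: tcplx_def)
qed

lemma card_le_tower_dim:
  assumes "i \<le> length fs" "\<rho> \<in> tcplx fs i"
  shows "card \<rho> \<le> tower_dim fs + 1"
proof -
  let ?dims = "{card \<sigma> - 1 | \<sigma> i. i \<le> length fs \<and> \<sigma> \<in> tcplx fs i}"
  have "?dims \<subseteq> (\<Union>i \<le> length fs. (\<lambda>\<sigma>. card \<sigma> - 1) ` tcplx fs i)" by blast
  then have "finite ?dims" by (rule finite_subset) (use finite_tcplx in auto)
  moreover have "card \<rho> - 1 \<in> ?dims" using assms by blast
  ultimately have "card \<rho> - 1 \<le> tower_dim fs" unfolding tower_dim_def by simp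
  then show ?thesis by linarith
qed

lemma num_incl_take_Suc:
  "i < length fs \<Longrightarrow>
     num_incl (take (Suc i) fs) = num_incl (take i fs) + (case fs ! i of Incl _ \<Rightarrow> 1 | Contr _ _ \<Rightarrow> 0)"
  unfolding num_incl_def by (cases "fs ! i") (simp_all add: take_Suc_conv_app_nth)

lemma num_vincl_take_Suc:
  "i < length fs \<Longrightarrow>
     num_vincl (take (Suc i) fs)
       = num_vincl (take i fs) + (case fs ! i of Incl \<sigma> \<Rightarrow> if card \<sigma> = 1 then 1 else 0 | Contr _ _ \<Rightarrow> 0)"
  unfolding num_vincl_def by (cases "fs ! i") (simp_all add: take_Suc_conv_app_nth)

lemma num_vincl_take_le: "num_vincl (take i fs) \<le> num_vincl fs"
proof -
  have "num_vincl fs = num_vincl (take i fs) + num_vincl (drop i fs)"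
    unfolding num_vincl_def by (subst append_take_drop_id[of i fs, symmetric], subst filter_append) simp
  then show ?thesis by simp
qed

text \<open>The weight of an active vertex counts the vertex inclusions whose vertices were merged into it;
  the contraction rule follows the naming convention of the coning step.\<close>
fun weight_step :: "'a cplx \<times> 'a cplx \<times> 'a set \<Rightarrow> ('a \<Rightarrow> nat) \<Rightarrow> 'a elem_op \<Rightarrow> 'a \<Rightarrow> nat" where
  "weight_step s k (Incl \<sigma>) = (if card \<sigma> = 1 then (\<lambda>z. if z \<in> \<sigma> then 1 else k z) else k)"
| "weight_step (K, H, A) k (Contr u v) =
     (if card (act_star u H A) \<le> card (act_star v H A) then k(v := k u + k v) else k(u := k v + k u))"

primrec weights :: "'a elem_op list \<Rightarrow> nat \<Rightarrow> 'a \<Rightarrow> nat" where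
  "weights fs 0 = (\<lambda>_. 0)"
| "weights fs (Suc i) = weight_step (states fs ! i) (weights fs i) (fs ! i)"

definition seen_vertices :: "'a elem_op list \<Rightarrow> nat \<Rightarrow> 'a set" where
  "seen_vertices fs i = {z. \<exists>j \<le> i. {z} \<in> tcplx fs j}"

lemma seen_verticesI: "{z} \<in> tcplx fs j \<Longrightarrow> j \<le> i \<Longrightarrow> z \<in> seen_vertices fs i"
  unfolding seen_vertices_def by blast

lemma seen_vertices_Suc: "seen_vertices fs i \<subseteq> seen_vertices fs (Suc i)"
  unfolding seen_vertices_def using le_SucI by blast

lemma active_subset_seen_vertices:
  assumes "coning_state K H A" "states fs ! i = (K, H, A)"
  shows "A \<subseteq> seen_vertices fs i"
proof
  fix z assume "z \<in> A"
  then have "{z} \<in> tcplx fs i"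
    using coning_state.vertex_active[OF assms(1)] assms(2) by (simp add: tcplx_def)
  then show "z \<in> seen_vertices fs i" by (rule seen_verticesI) simp
qed

text \<open>Remembering the vertices seen so far is what makes a vertex inclusion disjoint from the
  coning complex.\<close>
definition tower_inv :: "'a elem_op list \<Rightarrow> real \<Rightarrow> nat \<Rightarrow> bool" where
  "tower_inv fs C i \<longleftrightarrow> (case states fs ! i of (K, H, A) \<Rightarrow>
     coning_state K H A \<and> \<Union>H \<subseteq> seen_vertices fs i \<and> (\<forall>z \<in> A. 1 \<le> weights fs i z)
     \<and> sum (weights fs i) A = num_vincl (take i fs)
     \<and> amortized_size C (weights fs i) K H \<le> real (num_incl (take i fs)) * (3 + C))"

lemma tower_invD:
  assumes "tower_inv fs C i" "states fs ! i = (K, H, A)"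
  shows "coning_state K H A" "\<Union>H \<subseteq> seen_vertices fs i" "\<forall>z \<in> A. 1 \<le> weights fs i z"
    "sum (weights fs i) A = num_vincl (take i fs)"
    "amortized_size C (weights fs i) K H \<le> real (num_incl (take i fs)) * (3 + C)"
  using assms unfolding tower_inv_def by simp_all

lemma tower_inv_0: "tower_inv fs C 0"
  unfolding tower_inv_def states_0 amortized_size_def using coning_state_empty
  by (simp add: potential_def num_incl_def num_vincl_def)

lemma log_weight_le_tower_bound:
  assumes "tower_inv fs C i" "i \<le> length fs" "states fs ! i = (K, H, A)" "\<rho> \<in> K"
  shows "log_weight (weights fs i) \<rho> \<le> (real (tower_dim fs) + 1) * log 2 (real (num_vincl fs))"
proof -
  interpret coning_state K H A using tower_invD(1)[OF assms(1,3)] .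
  note weights = tower_invD(3,4)[OF assms(1,3)]
  show ?thesis
  proof (rule log_weight_le)
    show "finite \<rho>" using finite_simplex[OF assms(4)] .
    show "card \<rho> \<le> tower_dim fs + 1"
      using card_le_tower_dim[OF assms(2)] assms(3,4) unfolding tcplx_def by simp
    fix w assume "w \<in> \<rho>"
    then have "w \<in> A" using simplex_active[OF assms(4)] by blast
    then have "weights fs i w \<le> num_vincl (take i fs)"
      using member_le_sum[of w A "weights fs i"] finite_active weights(2) by simp
    then show "1 \<le> weights fs i w \<and> weights fs i w \<le> num_vincl fs"
      using \<open>w \<in> A\<close> weights(1) num_vincl_take_le[of i fs] by auto
  qed
qed

lemma tower_inv_Suc_incl:
  assumes valid: "valid_tower fs" and i: "i < length fs" and inv: "tower_inv fs C i"
    and f: "fs ! i = Incl \<sigma>"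
  shows "tower_inv fs C (Suc i)"
proof -
  obtain K H A where s: "states fs ! i = (K, H, A)" by (cases "states fs ! i")
  interpret coning_state K H A using tower_invD(1)[OF inv s] .
  note seen = tower_invD(2)[OF inv s] and pos = tower_invD(3)[OF inv s]
    and total = tower_invD(4)[OF inv s] and bound = tower_invD(5)[OF inv s]
  let ?k = "weights fs i"
  let ?A' = "if card \<sigma> = 1 then A \<union> \<sigma> else A"
  let ?k' = "if card \<sigma> = 1 then (\<lambda>z. if z \<in> \<sigma> then 1 else ?k z) else ?k"
  have \<sigma>: "finite \<sigma>" "\<sigma> \<noteq> {}" "\<sigma> \<notin> K" and faces: "\<And>\<tau>. \<tau> \<subset> \<sigma> \<Longrightarrow> \<tau> \<noteq> {} \<Longrightarrow> \<tau> \<in> K"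
    and new: "card \<sigma> = 1 \<Longrightarrow> \<forall>j \<le> i. \<sigma> \<notin> tcplx fs j"
    using valid[unfolded valid_tower_def, rule_format, OF i] s f unfolding tcplx_def by auto
  have vertex: "\<exists>z. \<sigma> = {z} \<and> z \<notin> A" if "card \<sigma> = 1"
    using that vertex_active \<sigma>(3) by (auto simp: card_Suc_eq)
  have fresh: "\<forall>\<tau> \<in> H. \<sigma> \<inter> \<tau> = {}" if "card \<sigma> = 1"
    using vertex[OF that] new[OF that] seen unfolding seen_vertices_def by blast
  have s': "states fs ! Suc i = (insert \<sigma> K, insert \<sigma> H, ?A')"
    using states_Suc[OF i] s f by simp
  have k': "weights fs (Suc i) = ?k'" using s f by simp
  have state': "coning_state (insert \<sigma> K) (insert \<sigma> H) ?A'"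
    using coning_state_insert[OF \<sigma> faces fresh] .
  moreover have "\<Union>(insert \<sigma> H) \<subseteq> seen_vertices fs (Suc i)"
  proof -
    have "\<sigma> \<subseteq> ?A'" using coning_state.simplex_active[OF state', of \<sigma>] by simp
    then show ?thesis
      using active_subset_seen_vertices[OF state' s'] seen seen_vertices_Suc[of fs i] by blast
  qed
  moreover have "\<forall>z \<in> ?A'. 1 \<le> ?k' z" using pos by auto
  moreover have "sum ?k' ?A' = num_vincl (take (Suc i) fs)"
  proof (cases "card \<sigma> = 1")
    case True
    then obtain z where "\<sigma> = {z}" "z \<notin> A" using vertex by blast
    moreover have "sum (\<lambda>w. if w = z then 1 else ?k w) A = sum ?k A"
      using \<open>z \<notin> A\<close> by (intro sum.cong) auto
    ultimately show ?thesis
      using True total finite_active num_vincl_take_Suc[OF i] f by simp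
  qed (use total num_vincl_take_Suc[OF i] f in simp)
  moreover have "amortized_size C ?k' (insert \<sigma> K) (insert \<sigma> H) \<le> amortized_size C ?k K H + (3 + C)"
  proof (rule amortized_size_insert_le[OF finite_complex finite_coned \<sigma>(3)])
    show "1 \<le> ?k' w" if "w \<in> \<sigma>" for w
      using that pos active_if_proper_faces[OF faces] by auto
    show "?k' w = ?k w" if "\<rho> \<in> K" "w \<in> \<rho>" for \<rho> w
      using that simplex_active vertex by auto
  qed
  ultimately show ?thesis
    using bound num_incl_take_Suc[OF i] f unfolding tower_inv_def s' k' by (simp add: algebra_simps)
qed

lemma tower_inv_Suc_contract:
  assumes i: "i < length fs" and inv: "tower_inv fs C i" and s: "states fs ! i = (K, H, A)"
    and f: "fs ! i = Contr u v"
    and xy: "x \<noteq> y" and x: "{x} \<in> K" and y: "{y} \<in> K"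
    and smaller: "card (act_star x H A) \<le> card (act_star y H A)"
    and s': "states fs ! Suc i = (contract_cplx x y K, H \<union> cone y (act_star x H A), A - {x})"
    and k': "weights fs (Suc i) = (weights fs i)(y := weights fs i x + weights fs i y)"
    and bounded: "\<And>\<rho>. \<rho> \<in> K \<Longrightarrow> log_weight (weights fs i) \<rho> \<le> C"
  shows "tower_inv fs C (Suc i)"
proof -
  interpret coning_state K H A using tower_invD(1)[OF inv s] .
  note seen = tower_invD(2)[OF inv s] and pos = tower_invD(3)[OF inv s]
    and total = tower_invD(4)[OF inv s] and bound = tower_invD(5)[OF inv s]
  let ?k = "weights fs i"
  have xA: "x \<in> A" and yA: "y \<in> A" using simplex_active x y by auto
  have "coning_state (contract_cplx x y K) (H \<union> cone y (act_star x H A)) (A - {x})"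
    using coning_state_contract[OF xy x y] .
  moreover have "\<Union>(H \<union> cone y (act_star x H A)) \<subseteq> seen_vertices fs (Suc i)"
  proof -
    have "\<Union>(cone y (act_star x H A)) \<subseteq> A"
      using yA unfolding cone_def act_star_def by blast
    then show ?thesis
      using seen seen_vertices_Suc[of fs i] active_subset_seen_vertices[OF coning_state_axioms s] by blast
  qed
  moreover have "\<forall>z \<in> A - {x}. 1 \<le> (?k(y := ?k x + ?k y)) z" using pos by auto
  moreover have "sum (?k(y := ?k x + ?k y)) (A - {x}) = num_vincl (take (Suc i) fs)"
    using sum_fun_upd_merge[OF finite_active xA yA xy, of ?k] total num_vincl_take_Suc[OF i] f by simp
  moreover have "amortized_size C (?k(y := ?k x + ?k y)) (contract_cplx x y K) (H \<union> cone y (act_star x H A))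
      \<le> amortized_size C ?k K H"
    using pos by (intro amortized_size_contract_le[OF xy x y smaller _ bounded]) auto
  ultimately show ?thesis
    using bound num_incl_take_Suc[OF i] f unfolding tower_inv_def s' k' by simp
qed

lemma tower_inv_Suc:
  assumes valid: "valid_tower fs" and i: "i < length fs"
    and C: "C = (real (tower_dim fs) + 1) * log 2 (real (num_vincl fs))"
    and inv: "tower_inv fs C i"
  shows "tower_inv fs C (Suc i)"
proof (cases "fs ! i")
  case (Incl \<sigma>)
  then show ?thesis using tower_inv_Suc_incl[OF valid i inv] by blast
next
  case (Contr u v)
  obtain K H A where s: "states fs ! i = (K, H, A)" by (cases "states fs ! i")
  have uv: "u \<noteq> v" "{u} \<in> K" "{v} \<in> K"
    using valid[unfolded valid_tower_def, rule_format, OF i] s Contr unfolding tcplx_def by auto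
  have bounded: "log_weight (weights fs i) \<rho> \<le> C" if "\<rho> \<in> K" for \<rho>
    using log_weight_le_tower_bound[OF inv _ s that] i C by simp
  show ?thesis
  proof (cases "card (act_star u H A) \<le> card (act_star v H A)")
    case True
    show ?thesis
      by (rule tower_inv_Suc_contract[OF i inv s Contr uv True _ _ bounded])
        (use states_Suc[OF i] s Contr True in simp_all)
  next
    case False
    show ?thesis
      by (rule tower_inv_Suc_contract[OF i inv s Contr uv(1)[symmetric] uv(3,2) _ _ _ bounded])
        (use states_Suc[OF i] s Contr False in simp_all)
  qed
qed

theorem proposition12:
  fixes fs :: "'a elem_op list"
  assumes "valid_tower fs"
  shows "real (card (hat_last fs))
           \<le> real (num_incl fs) + 2 * (real (tower_dim fs) + 1) * real (num_incl fs)
               * (1 + log 2 (real (num_vincl fs)))"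
proof -
  define n where "n = real (num_incl fs)"
  define L where "L = log 2 (real (num_vincl fs))"
  define C where "C = (real (tower_dim fs) + 1) * L"
  have inv: "tower_inv fs C i" if "i \<le> length fs" for i
    using that
  proof (induction i)
    case (Suc i)
    then show ?case using tower_inv_Suc[OF assms] unfolding C_def L_def by simp
  qed (rule tower_inv_0)
  obtain K H A where s: "states fs ! length fs = (K, H, A)" by (cases "states fs ! length fs")
  have "real (card H) \<le> amortized_size C (weights fs (length fs)) K H"
    using log_weight_le_tower_bound[OF inv[OF order_refl] order_refl s]
    unfolding C_def L_def by (rule card_le_amortized_size)
  also have "\<dots> \<le> n * (3 + C)"
    using tower_invD(5)[OF inv[OF order_refl] s] unfolding n_def by simp
  also have "\<dots> \<le> n + 2 * (real (tower_dim fs) + 1) * n * (1 + L)"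
    using log2_of_nat_nonneg unfolding C_def L_def n_def
    by (simp add: algebra_simps mult_right_mono mult_left_mono)
  finally show ?thesis
    using hat_last_eq[of fs] s unfolding n_def L_def by simp
qed

end
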